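(* Let $G$ be a graph of order $n$ with no isolated vertices. Then $\gamma_{\rm gr}^t(G)=n$ if and only if there is an integer $k$ with $n=2k$ such that the vertices of $G$ can be labeled $x_1,\ldots,x_k,y_1,\ldots,y_k$ so that: (i) $x_i$ is adjacent to $y_i$ for each $i\in\{1,\ldots,k\}$; (ii) $\{x_1,\ldots,x_k\}$ is an independent set; and (iii) whenever $y_j$ is adjacent to $x_i$, we have $i \ge j$.
   Context: All graphs are finite, simple, without isolated vertices. $N(v)$ denotes the open neighborhood of $v$. A sequence $S=(v_1,\ldots,v_k)$ of distinct vertices of $G$ is a legal (open neighborhood) sequence if $N(v_i)\setminus \bigcup_{j=1}^{i-1} N(v_j)\neq\emptyset$ for every $i\in\{2,\ldots,k\}$. It is a total dominating sequence if moreover the set $\{v_1,\ldots,v_k\}$ is a total dominating set of $G$ (every vertex has a neighbor in it). The Grundy total domination number $\gamma_{\rm gr}^t(G)$ is the maximum length of a total dominating sequence of $G$. *)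

theory Defs
  imports Main
begin

definition graph :: "'a set \<Rightarrow> ('a \<Rightarrow> 'a \<Rightarrow> bool) \<Rightarrow> bool" where
  "graph V E \<longleftrightarrow> finite V \<and> (\<forall>u v. E u v \<longrightarrow> u \<in> V \<and> v \<in> V)
     \<and> (\<forall>u v. E u v \<longrightarrow> E v u) \<and> (\<forall>v. \<not> E v v)"

definition no_isolated :: "'a set \<Rightarrow> ('a \<Rightarrow> 'a \<Rightarrow> bool) \<Rightarrow> bool" where
  "no_isolated V E \<longleftrightarrow> (\<forall>v\<in>V. \<exists>u. E v u)"

definition nbhd :: "('a \<Rightarrow> 'a \<Rightarrow> bool) \<Rightarrow> 'a \<Rightarrow> 'a set" where
  "nbhd E v = {u. E v u}"

definition legal_seq :: "'a set \<Rightarrow> ('a \<Rightarrow> 'a \<Rightarrow> bool) \<Rightarrow> 'a list \<Rightarrow> bool" where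
  "legal_seq V E S \<longleftrightarrow> distinct S \<and> set S \<subseteq> V \<and>
     (\<forall>i. 0 < i \<and> i < length S \<longrightarrow>
        nbhd E (S ! i) - (\<Union>j<i. nbhd E (S ! j)) \<noteq> {})"

definition total_dominating :: "'a set \<Rightarrow> ('a \<Rightarrow> 'a \<Rightarrow> bool) \<Rightarrow> 'a set \<Rightarrow> bool" where
  "total_dominating V E D \<longleftrightarrow> (\<forall>v\<in>V. \<exists>u\<in>D. E v u)"

definition total_dom_seq :: "'a set \<Rightarrow> ('a \<Rightarrow> 'a \<Rightarrow> bool) \<Rightarrow> 'a list \<Rightarrow> bool" where
  "total_dom_seq V E S \<longleftrightarrow> legal_seq V E S \<and> total_dominating V E (set S)"

definition grundy_total_dom :: "'a set \<Rightarrow> ('a \<Rightarrow> 'a \<Rightarrow> bool) \<Rightarrow> nat" where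
  "grundy_total_dom V E = Max {length S | S. total_dom_seq V E S}"

end

theory Submission
  imports Defs
begin

text \<open>A total dominating sequence of length \<open>n = |V|\<close> lists every vertex, and each vertex \<open>v\<close>
  footprints a vertex \<open>f v\<close>: a neighbour of \<open>v\<close> adjacent to no earlier vertex. Hence every
  neighbour of \<open>f v\<close> comes no earlier than \<open>v\<close>; for the neighbour \<open>f (f v)\<close> this says that the
  permutation \<open>f \<circ> f\<close> never moves a vertex backwards, so it is the identity. The vertices preceding
  their footprint form an independent set \<open>X\<close>, \<open>V\<close> is the disjoint union of \<open>X\<close> and \<open>f ` X\<close>,
  and listing \<open>X\<close> in sequence order as \<open>x\<^sub>1, \<dots>, x\<^sub>k\<close> with \<open>y\<^sub>i = f x\<^sub>i\<close> gives the labeling.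
  Conversely, \<open>x\<^sub>1, \<dots>, x\<^sub>k, y\<^sub>k, \<dots>, y\<^sub>1\<close> is a total dominating sequence of length \<open>2k\<close>.\<close>

lemma bij_betw_le_imp_eq:
  fixes g :: "'a \<Rightarrow> 'b::ordered_cancel_comm_monoid_add"
  assumes "finite A" "bij_betw p A A" "\<And>a. a \<in> A \<Longrightarrow> g a \<le> g (p a)" "a \<in> A"
  shows "g (p a) = g a"
proof -
  have "sum g A = sum (\<lambda>a. g (p a)) A" by (rule sum.reindex_bij_betw[OF assms(2), symmetric])
  then have "g a = g (p a)" by (rule sum_mono_inv) (use assms in auto)
  then show ?thesis by simp
qed

lemma bij_betw_sorted_list_of_set_nth:
  fixes A :: "'a::linorder set"
  assumes "finite A"
  shows "bij_betw (\<lambda>m. sorted_list_of_set A ! (m - 1)) {1..card A} A"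
    and "strict_mono_on {1..card A} (\<lambda>m. sorted_list_of_set A ! (m - 1))"
proof -
  let ?L = "sorted_list_of_set A"
  have "bij_betw (\<lambda>m. m - 1) {1..card A} {..<length ?L}"
    by (rule bij_betw_byWitness[where f' = Suc]) auto
  moreover have "bij_betw ((!) ?L) {..<length ?L} A"
    using assms by (intro bij_betw_nth) simp_all
  ultimately show "bij_betw (\<lambda>m. ?L ! (m - 1)) {1..card A} A"
    using bij_betw_trans by (auto simp: comp_def)
  show "strict_mono_on {1..card A} (\<lambda>m. ?L ! (m - 1))"
  proof (rule strict_mono_onI)
    fix r s assume "r \<in> {1..card A}" "s \<in> {1..card A}" "r < s"
    then show "?L ! (r - 1) < ?L ! (s - 1)"
      using sorted_wrt_nth_less[OF strict_sorted_list_of_set, of "r - 1" "s - 1" A] by simp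
  qed
qed

text \<open>An ordering of the vertices (indices \<open>0..<n\<close>, adjacency \<open>R\<close>) together with a choice of
  footprints: \<open>\<phi> i\<close> is adjacent to \<open>i\<close> but to no earlier index.\<close>
locale footprinter =
  fixes n :: nat and R :: "nat \<Rightarrow> nat \<Rightarrow> bool" and \<phi> :: "nat \<Rightarrow> nat"
  assumes R_sym: "R i j \<Longrightarrow> R j i"
    and R_irrefl: "\<not> R i i"
    and \<phi>_range: "i < n \<Longrightarrow> \<phi> i < n"
    and R_\<phi>: "i < n \<Longrightarrow> R i (\<phi> i)"
    and \<phi>_first: "i < n \<Longrightarrow> j < n \<Longrightarrow> R j (\<phi> i) \<Longrightarrow> i \<le> j"
begin

lemma inj_on_\<phi>: "inj_on \<phi> {..<n}"
proof (rule inj_onI)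
  fix i j assume "i \<in> {..<n}" "j \<in> {..<n}" "\<phi> i = \<phi> j"
  then show "i = j" using R_\<phi> \<phi>_first by (metis le_antisym lessThan_iff)
qed

lemma bij_betw_\<phi>: "bij_betw \<phi> {..<n} {..<n}"
  using endo_inj_surj[of "{..<n}" \<phi>] inj_on_\<phi> \<phi>_range by (auto simp: bij_betw_def)

text \<open>Every index precedes its double footprint, since \<open>\<phi> (\<phi> i)\<close> is adjacent to \<open>\<phi> i\<close>;
  as \<open>\<phi> \<circ> \<phi>\<close> permutes the indices, it is the identity.\<close>
lemma \<phi>_\<phi>: "i < n \<Longrightarrow> \<phi> (\<phi> i) = i"
proof -
  have "bij_betw (\<phi> \<circ> \<phi>) {..<n} {..<n}" using bij_betw_\<phi> bij_betw_trans by blast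
  moreover have "i \<le> (\<phi> \<circ> \<phi>) i" if "i \<in> {..<n}" for i
    using that \<phi>_first \<phi>_range R_\<phi> R_sym by simp
  moreover assume "i < n"
  ultimately show ?thesis using bij_betw_le_imp_eq[of "{..<n}" "\<phi> \<circ> \<phi>" id i] by simp
qed

lemma \<phi>_neq: "i < n \<Longrightarrow> \<phi> i \<noteq> i"
  using R_\<phi> R_irrefl by metis

definition lows :: "nat set" where
  "lows = {i. i < n \<and> i < \<phi> i}"

lemma finite_lows: "finite lows"
  unfolding lows_def by simp

lemma lows_Int_\<phi>_lows: "lows \<inter> \<phi> ` lows = {}"
  unfolding lows_def using \<phi>_\<phi> by fastforce

lemma lows_Un_\<phi>_lows: "lows \<union> \<phi> ` lows = {..<n}"
proof
  show "lows \<union> \<phi> ` lows \<subseteq> {..<n}" unfolding lows_def using \<phi>_range by auto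
  show "{..<n} \<subseteq> lows \<union> \<phi> ` lows"
  proof
    fix i assume i: "i \<in> {..<n}"
    show "i \<in> lows \<union> \<phi> ` lows"
    proof (cases "i < \<phi> i")
      case True
      then show ?thesis using i unfolding lows_def by simp
    next
      case False
      then have "\<phi> i < i" using i \<phi>_neq[of i] by simp
      then have "\<phi> i \<in> lows" using i \<phi>_range \<phi>_\<phi> unfolding lows_def by auto
      then show ?thesis using i \<phi>_\<phi> by (metis UnI2 image_eqI lessThan_iff)
    qed
  qed
qed

lemma card_eq_twice_card_lows: "n = 2 * card lows"
proof -
  have "n = card (lows \<union> \<phi> ` lows)" using lows_Un_\<phi>_lows by simp
  also have "\<dots> = card lows + card (\<phi> ` lows)"
    using lows_Int_\<phi>_lows finite_lows by (simp add: card_Un_disjoint)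
  also have "card (\<phi> ` lows) = card lows"
    using inj_on_\<phi> lows_Un_\<phi>_lows by (metis card_image inj_on_subset Un_upper1)
  finally show ?thesis by simp
qed

text \<open>For adjacent \<open>i, j \<in> lows\<close> we would get \<open>i < \<phi> i \<le> j < \<phi> j \<le> i\<close>.\<close>
lemma lows_independent:
  assumes "i \<in> lows" "j \<in> lows" shows "\<not> R i j"
proof
  assume ij: "R i j"
  have "i < n" "j < n" "i < \<phi> i" "j < \<phi> j" using assms unfolding lows_def by auto
  moreover have "\<phi> j \<le> i" using ij \<phi>_first \<phi>_range \<phi>_\<phi> calculation by metis
  moreover have "\<phi> i \<le> j" using R_sym[OF ij] \<phi>_first \<phi>_range \<phi>_\<phi> calculation by metis
  ultimately show False by simp
qed

end

lemma legal_seq_iff: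
  "legal_seq V E S \<longleftrightarrow> distinct S \<and> set S \<subseteq> V \<and>
     (\<forall>i. 0 < i \<and> i < length S \<longrightarrow> (\<exists>w. E (S ! i) w \<and> (\<forall>j<i. \<not> E (S ! j) w)))"
  unfolding legal_seq_def nbhd_def by blast

lemma legal_seq_footprint:
  assumes "no_isolated V E" "legal_seq V E S" "i < length S"
  shows "\<exists>w. E (S ! i) w \<and> (\<forall>j<i. \<not> E (S ! j) w)"
proof (cases "i = 0")
  case True
  have "S ! 0 \<in> V" using assms(2,3) True unfolding legal_seq_def by (meson nth_mem subsetD)
  then show ?thesis using assms(1) True unfolding no_isolated_def by auto
next
  case False
  then show ?thesis using assms(2,3) unfolding legal_seq_iff by blast
qed

lemma legal_seq_snoc:
  assumes "legal_seq V E S" "u \<in> V" "E u w" "\<forall>s\<in>set S. \<not> E s w"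
  shows "legal_seq V E (S @ [u])"
  unfolding legal_seq_iff
proof (intro conjI allI impI)
  show "distinct (S @ [u])" "set (S @ [u]) \<subseteq> V"
    using assms unfolding legal_seq_def by auto
  fix i assume i: "0 < i \<and> i < length (S @ [u])"
  show "\<exists>w. E ((S @ [u]) ! i) w \<and> (\<forall>j<i. \<not> E ((S @ [u]) ! j) w)"
  proof (cases "i < length S")
    case True
    then show ?thesis using assms(1) i unfolding legal_seq_iff by (auto simp: nth_append)
  next
    case False
    then have "i = length S" using i by simp
    then show ?thesis using assms(3,4) by (auto simp: nth_append)
  qed
qed

lemma legal_seq_length_le:
  assumes "graph V E" "legal_seq V E S"
  shows "length S \<le> card V"
proof -
  have "length S = card (set S)" using assms(2) distinct_card unfolding legal_seq_def by metis
  also have "\<dots> \<le> card V" using assms card_mono unfolding legal_seq_def graph_def by metis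
  finally show ?thesis .
qed

text \<open>A legal sequence of maximal length is total dominating: an undominated vertex
  footprints any of its neighbours appended to the sequence.\<close>
lemma total_dom_seq_exists:
  assumes G: "graph V E" and NI: "no_isolated V E"
  shows "\<exists>S. total_dom_seq V E S"
proof -
  let ?P = "\<lambda>m. \<exists>S. legal_seq V E S \<and> length S = m"
  have "?P 0" by (rule exI[of _ "[]"]) (simp add: legal_seq_def)
  moreover have "\<forall>m. ?P m \<longrightarrow> m \<le> card V"
    using legal_seq_length_le[OF G] by blast
  ultimately obtain m where "?P m" and max: "\<forall>m'. ?P m' \<longrightarrow> m' \<le> m"
    using Nat.ex_has_greatest_nat[of ?P 0 "card V"] by blast
  then obtain S where S: "legal_seq V E S" "length S = m" by blast
  have "total_dominating V E (set S)"
    unfolding total_dominating_def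
  proof (rule ccontr)
    assume "\<not> (\<forall>v\<in>V. \<exists>u\<in>set S. E v u)"
    then obtain v where v: "v \<in> V" "\<forall>s\<in>set S. \<not> E v s" by blast
    obtain u where u: "E v u" using NI v(1) unfolding no_isolated_def by blast
    have "legal_seq V E (S @ [u])"
    proof (rule legal_seq_snoc[OF S(1)])
      show "u \<in> V" "E u v" using G u unfolding graph_def by auto
      show "\<forall>s\<in>set S. \<not> E s v" using G v(2) unfolding graph_def by blast
    qed
    then have "length (S @ [u]) \<le> m" using max by blast
    then show False using S(2) by simp
  qed
  then show ?thesis using S(1) unfolding total_dom_seq_def by blast
qed

lemma grundy_total_dom_eq_card_iff:
  assumes "graph V E" "no_isolated V E"
  shows "grundy_total_dom V E = card V \<longleftrightarrow> (\<exists>S. total_dom_seq V E S \<and> length S = card V)"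
proof -
  let ?L = "{length S | S. total_dom_seq V E S}"
  have le: "\<And>m. m \<in> ?L \<Longrightarrow> m \<le> card V"
    using legal_seq_length_le[OF assms(1)] unfolding total_dom_seq_def by blast
  then have "finite ?L" by (meson finite_atMost finite_subset atMost_iff subsetI)
  moreover have "?L \<noteq> {}" using total_dom_seq_exists[OF assms] by blast
  ultimately have "Max ?L = card V \<longleftrightarrow> card V \<in> ?L"
    using le Max_in Max_eqI[of ?L "card V"] by (metis (no_types, lifting))
  then show ?thesis unfolding grundy_total_dom_def by auto
qed


definition xy_labeling :: "'a set \<Rightarrow> ('a \<Rightarrow> 'a \<Rightarrow> bool) \<Rightarrow> nat \<Rightarrow> (nat \<Rightarrow> 'a) \<Rightarrow> (nat \<Rightarrow> 'a) \<Rightarrow> bool"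
  where "xy_labeling V E k x y \<longleftrightarrow>
    inj_on x {1..k} \<and> inj_on y {1..k} \<and> x ` {1..k} \<inter> y ` {1..k} = {} \<and>
    x ` {1..k} \<union> y ` {1..k} = V \<and>
    (\<forall>i\<in>{1..k}. E (x i) (y i)) \<and>
    (\<forall>i\<in>{1..k}. \<forall>j\<in>{1..k}. \<not> E (x i) (x j)) \<and>
    (\<forall>i\<in>{1..k}. \<forall>j\<in>{1..k}. E (y j) (x i) \<longrightarrow> i \<ge> j)"

lemma xy_labeling_of_total_dom_seq:
  assumes G: "graph V E" and NI: "no_isolated V E"
    and S: "total_dom_seq V E S" and len: "length S = card V"
  shows "\<exists>k x y. card V = 2 * k \<and> xy_labeling V E k x y"
proof -
  let ?n = "length S"
  have legal: "legal_seq V E S" using S unfolding total_dom_seq_def by blast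
  have dS: "distinct S" using legal unfolding legal_seq_def by blast
  have sS: "set S = V"
    using G legal len dS card_subset_eq distinct_card unfolding graph_def legal_seq_def by metis
  have "\<forall>i<?n. \<exists>j<?n. E (S ! i) (S ! j) \<and> (\<forall>l<i. \<not> E (S ! l) (S ! j))"
  proof (intro allI impI)
    fix i assume "i < ?n"
    then obtain w where w: "E (S ! i) w" "\<forall>l<i. \<not> E (S ! l) w"
      using legal_seq_footprint[OF NI legal] by blast
    then have "w \<in> set S" using G sS unfolding graph_def by blast
    then show "\<exists>j<?n. E (S ! i) (S ! j) \<and> (\<forall>l<i. \<not> E (S ! l) (S ! j))"
      using w by (metis in_set_conv_nth)
  qed
  then obtain \<phi> where \<phi>: "\<And>i. i < ?n \<Longrightarrow>
      \<phi> i < ?n \<and> E (S ! i) (S ! \<phi> i) \<and> (\<forall>l<i. \<not> E (S ! l) (S ! \<phi> i))"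
    by metis
  interpret F: footprinter ?n "\<lambda>i j. E (S ! i) (S ! j)" \<phi>
    by unfold_locales (use G \<phi> in \<open>auto simp: graph_def not_le[symmetric]\<close>)
  define k where "k = card F.lows"
  define e where "e = (\<lambda>m. sorted_list_of_set F.lows ! (m - 1))"
  have e_bij: "bij_betw e {1..k} F.lows" and e_mono: "strict_mono_on {1..k} e"
    unfolding e_def k_def using bij_betw_sorted_list_of_set_nth F.finite_lows by blast+
  have lows_sub: "F.lows \<subseteq> {..<?n}" and \<phi>_lows_sub: "\<phi> ` F.lows \<subseteq> {..<?n}"
    using F.lows_Un_\<phi>_lows by auto
  have e_lows: "e i \<in> F.lows" and e_lt: "e i < ?n" if "i \<in> {1..k}" for i
    using that e_bij lows_sub by (auto simp: bij_betw_def)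
  have inj_S: "inj_on ((!) S) {..<?n}" using dS by (simp add: inj_on_nth)
  have "xy_labeling V E k ((!) S \<circ> e) ((!) S \<circ> \<phi> \<circ> e)"
    unfolding xy_labeling_def
  proof (intro conjI ballI impI)
    have "inj_on e {1..k}" "e ` {1..k} = F.lows" using e_bij by (auto simp: bij_betw_def)
    moreover have "inj_on \<phi> F.lows" using F.inj_on_\<phi> lows_sub by (rule inj_on_subset)
    ultimately show "inj_on ((!) S \<circ> e) {1..k}" "inj_on ((!) S \<circ> \<phi> \<circ> e) {1..k}"
      using inj_on_subset[OF inj_S] lows_sub \<phi>_lows_sub by (auto intro!: comp_inj_on simp: image_comp)
    have "((!) S \<circ> e) ` {1..k} = (!) S ` F.lows" "((!) S \<circ> \<phi> \<circ> e) ` {1..k} = (!) S ` \<phi> ` F.lows"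
      unfolding image_comp[symmetric] using \<open>e ` {1..k} = F.lows\<close> by simp_all
    moreover have "(!) S ` F.lows \<inter> (!) S ` \<phi> ` F.lows = (!) S ` (F.lows \<inter> \<phi> ` F.lows)"
      by (rule inj_on_image_Int[OF inj_S lows_sub \<phi>_lows_sub, symmetric])
    moreover have "(!) S ` F.lows \<union> (!) S ` \<phi> ` F.lows = (!) S ` {..<?n}"
      unfolding F.lows_Un_\<phi>_lows[symmetric] by (rule image_Un[symmetric])
    moreover have "(!) S ` {..<?n} = V"
      using sS by (simp add: lessThan_atLeast0 nth_image)
    ultimately show "((!) S \<circ> e) ` {1..k} \<inter> ((!) S \<circ> \<phi> \<circ> e) ` {1..k} = {}"
      "((!) S \<circ> e) ` {1..k} \<union> ((!) S \<circ> \<phi> \<circ> e) ` {1..k} = V"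
      using F.lows_Int_\<phi>_lows by simp_all
  next
    fix i assume "i \<in> {1..k}"
    then show "E (((!) S \<circ> e) i) (((!) S \<circ> \<phi> \<circ> e) i)"
      using e_lt F.R_\<phi> by simp
  next
    fix i j assume "i \<in> {1..k}" "j \<in> {1..k}"
    then show "\<not> E (((!) S \<circ> e) i) (((!) S \<circ> e) j)"
      using e_lows F.lows_independent by simp
  next
    fix i j assume ij: "i \<in> {1..k}" "j \<in> {1..k}"
      and "E (((!) S \<circ> \<phi> \<circ> e) j) (((!) S \<circ> e) i)"
    then have "e j \<le> e i"
      using e_lt F.\<phi>_first F.R_sym by simp
    show "j \<le> i"
    proof (rule ccontr)
      assume "\<not> j \<le> i"
      then have "e i < e j" using strict_mono_onD[OF e_mono] ij by simp
      then show False using \<open>e j \<le> e i\<close> by simp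
    qed
  qed
  then show ?thesis using len F.card_eq_twice_card_lows unfolding k_def by auto
qed

lemma image_double_minus_atLeastLessThan: "(\<lambda>t. 2 * k - t) ` {k..<2 * k} = {1..(k::nat)}"
proof
  show "{1..k} \<subseteq> (\<lambda>t. 2 * k - t) ` {k..<2 * k}"
  proof
    fix m assume "m \<in> {1..k}"
    then show "m \<in> (\<lambda>t. 2 * k - t) ` {k..<2 * k}" by (intro image_eqI[of _ _ "2 * k - m"]) auto
  qed
qed auto

text \<open>The sequence \<open>x\<^sub>1, \<dots>, x\<^sub>k, y\<^sub>k, \<dots>, y\<^sub>1\<close>: \<open>x\<^sub>i\<close> footprints \<open>y\<^sub>i\<close> and \<open>y\<^sub>i\<close> footprints \<open>x\<^sub>i\<close>.\<close>
lemma total_dom_seq_of_xy_labeling: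
  assumes G: "graph V E" and cV: "card V = 2 * k" and L: "xy_labeling V E k x y"
  shows "\<exists>S. total_dom_seq V E S \<and> length S = card V"
proof -
  have sym: "\<And>u v. E u v \<Longrightarrow> E v u" using G unfolding graph_def by blast
  have cover: "x ` {1..k} \<union> y ` {1..k} = V" and xy: "\<And>i. i \<in> {1..k} \<Longrightarrow> E (x i) (y i)"
    and indep: "\<And>i j. i \<in> {1..k} \<Longrightarrow> j \<in> {1..k} \<Longrightarrow> \<not> E (x i) (x j)"
    and yx: "\<And>i j. i \<in> {1..k} \<Longrightarrow> j \<in> {1..k} \<Longrightarrow> E (y j) (x i) \<Longrightarrow> j \<le> i"
    using L unfolding xy_labeling_def by blast+
  define h where "h t = (if t < k then x (Suc t) else y (2 * k - t))" for t
  define S where "S = map h [0..<2 * k]"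
  have "h ` {..<k} = x ` {1..k}"
    unfolding h_def image_Suc_lessThan[symmetric] image_image by simp
  moreover have "h ` {k..<2 * k} = y ` {1..k}"
    unfolding h_def image_double_minus_atLeastLessThan[symmetric] image_image by simp
  moreover have "{..<2 * k} = {..<k} \<union> {k..<2 * k}" by auto
  ultimately have sS: "set S = V" unfolding S_def using cover by (simp add: lessThan_atLeast0 image_Un)
  have lS: "length S = card V" unfolding S_def using cV by simp
  have footprint: "\<exists>w. E (S ! t) w \<and> (\<forall>l<t. \<not> E (S ! l) w)" if t: "t < 2 * k" for t
  proof (cases "t < k")
    case True
    have "\<not> E (S ! l) (y (Suc t))" if "l < t" for l
      using that t True yx[of "Suc l" "Suc t"] sym unfolding S_def h_def by auto
    moreover have "E (S ! t) (y (Suc t))" using t True xy unfolding S_def h_def by simp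
    ultimately show ?thesis by blast
  next
    case False
    with t have tk: "2 * k - t \<in> {1..k}" by auto
    have "\<not> E (S ! l) (x (2 * k - t))" if l: "l < t" for l
    proof (cases "l < k")
      case True
      then show ?thesis using l t tk indep[of "Suc l" "2 * k - t"] unfolding S_def h_def by simp
    next
      case False
      with l t have "2 * k - l \<in> {1..k}" "2 * k - t < 2 * k - l" by auto
      then show ?thesis using l t False yx[OF tk] unfolding S_def h_def by fastforce
    qed
    moreover have "E (S ! t) (x (2 * k - t))" using t False sym[OF xy[OF tk]] unfolding S_def h_def by simp
    ultimately show ?thesis by blast
  qed
  have "distinct S" by (rule card_distinct) (use sS lS in simp)
  then have "legal_seq V E S"
    unfolding legal_seq_iff using sS lS cV footprint by auto
  moreover have "total_dominating V E (set S)"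
    unfolding total_dominating_def sS using cover xy sym by blast
  ultimately show ?thesis using lS unfolding total_dom_seq_def by blast
qed

theorem mainTheorem5:
  fixes V :: "'a set" and E :: "'a \<Rightarrow> 'a \<Rightarrow> bool"
  assumes "graph V E" and "no_isolated V E"
  shows "grundy_total_dom V E = card V \<longleftrightarrow>
    (\<exists>k::nat. card V = 2 * k \<and>
      (\<exists>x y :: nat \<Rightarrow> 'a.
         inj_on x {1..k} \<and> inj_on y {1..k} \<and> x ` {1..k} \<inter> y ` {1..k} = {} \<and>
         x ` {1..k} \<union> y ` {1..k} = V \<and>
         (\<forall>i\<in>{1..k}. E (x i) (y i)) \<and>
         (\<forall>i\<in>{1..k}. \<forall>j\<in>{1..k}. \<not> E (x i) (x j)) \<and>
         (\<forall>i\<in>{1..k}. \<forall>j\<in>{1..k}. E (y j) (x i) \<longrightarrow> i \<ge> j)))"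
proof -
  have "grundy_total_dom V E = card V \<longleftrightarrow> (\<exists>S. total_dom_seq V E S \<and> length S = card V)"
    by (rule grundy_total_dom_eq_card_iff[OF assms])
  also have "\<dots> \<longleftrightarrow> (\<exists>k x y. card V = 2 * k \<and> xy_labeling V E k x y)"
    using xy_labeling_of_total_dom_seq[OF assms] total_dom_seq_of_xy_labeling[OF assms(1)] by blast
  finally show ?thesis unfolding xy_labeling_def by blast
qed

end
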